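(* Let $n\ge 5$ and $M\ge1$ be integers, $U=\{0,1,\ldots,M-1\}$, and let $\phi:\binom{U}{2}\to\{\text{red},\text{blue}\}$ be a $2$-coloring such that every $n$-element subset of $U$ contains three elements $x<y<z$ with $\phi(x,y)=\phi(y,z)\ne\phi(x,z)$. Let $H=H_\phi$ be the $4$-uniform hypergraph on $V=\{0,\ldots,2^M-1\}$ defined below. Then the independence number of $H$ satisfies $\alpha(H)<2^6n^5+1$, i.e., $H$ has no independent set of size $2^6n^5+1$.
   Context: Every $a\in V=\{0,\ldots,2^M-1\}$ is written in binary as $a=\sum_{i=0}^{M-1}a(i)2^i$ with $a(i)\in\{0,1\}$. For $a\ne b$ in $V$, $\delta(a,b)$ denotes the largest index $i$ with $a(i)\ne b(i)$; thus $\delta(a,b)\in U$. For a pair $\{x,y\}$ of distinct elements of $U$ we write $\phi(x,y)=\phi(y,x)$ for its color. For a $4$-tuple $v_1<v_2<v_3<v_4$ of $V$, set $\delta_i=\delta(v_i,v_{i+1})$ for $i=1,2,3$. The $4$-tuple $\{v_1,v_2,v_3,v_4\}$ is an edge of $H$ if and only if one of the following holds: (i) $\delta_1<\delta_2<\delta_3$ or $\delta_1>\delta_2>\delta_3$, and $\phi(\delta_1,\delta_2)=\phi(\delta_2,\delta_3)\ne\phi(\delta_1,\delta_3)$; (ii) $\delta_1>\delta_2<\delta_3$, $\delta_1>\delta_3$, and $\phi(\delta_1,\delta_2)\ne\phi(\delta_2,\delta_3)$; (iii) $\delta_1>\delta_2<\delta_3$, $\delta_1<\delta_3$, and $\phi(\delta_1,\delta_2)=\phi(\delta_1,\delta_3)=\phi(\delta_2,\delta_3)$.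 An independent set of $H$ is a set of vertices containing no edge of $H$; $\alpha(H)$ is the maximum size of an independent set. *)

theory Defs
  imports Main
begin

definition bitd :: "nat \<Rightarrow> nat \<Rightarrow> nat" where
  "bitd a i = a div 2 ^ i mod 2"

definition delta :: "nat \<Rightarrow> nat \<Rightarrow> nat \<Rightarrow> nat" where
  "delta M a b = Max {i. i < M \<and> bitd a i \<noteq> bitd b i}"

(* the edge condition for v1 < v2 < v3 < v4; the colouring phi is given as a
   function on pairs (assumed symmetric), colours encoded as bool *)
definition is_edge :: "nat \<Rightarrow> (nat \<Rightarrow> nat \<Rightarrow> bool) \<Rightarrow> nat \<Rightarrow> nat \<Rightarrow> nat \<Rightarrow> nat \<Rightarrow> bool" where
  "is_edge M phi v1 v2 v3 v4 =
    (let d1 = delta M v1 v2; d2 = delta M v2 v3; d3 = delta M v3 v4 in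
      (((d1 < d2 \<and> d2 < d3) \<or> (d1 > d2 \<and> d2 > d3)) \<and>
          phi d1 d2 = phi d2 d3 \<and> phi d2 d3 \<noteq> phi d1 d3)
    \<or> (d1 > d2 \<and> d2 < d3 \<and> d1 > d3 \<and> phi d1 d2 \<noteq> phi d2 d3)
    \<or> (d1 > d2 \<and> d2 < d3 \<and> d1 < d3 \<and> phi d1 d2 = phi d1 d3 \<and> phi d1 d3 = phi d2 d3))"

definition independent :: "nat \<Rightarrow> (nat \<Rightarrow> nat \<Rightarrow> bool) \<Rightarrow> nat set \<Rightarrow> bool" where
  "independent M phi S =
    (S \<subseteq> {0..<2 ^ M} \<and>
     (\<forall>v1 v2 v3 v4. v1 \<in> S \<and> v2 \<in> S \<and> v3 \<in> S \<and> v4 \<in> S \<and>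
        v1 < v2 \<and> v2 < v3 \<and> v3 < v4 \<longrightarrow> \<not> is_edge M phi v1 v2 v3 v4))"

end

theory Submission
  imports Defs
begin

text \<open>Fix an independent set S. The levels of a vertex v in S are the indices
  delta(v, w) for w in S - {v}, and the signature of v is the word of bits of v at its levels,
  read upwards. Distinct vertices have distinct signatures: above delta(v, w) the two vertices
  have the same levels and the same bits there, while at delta(v, w) both have a level and
  their bits differ.

  For levels x < y < z of v, the vertex v together with vertices branching off v at x, y and z
  form four vertices whose consecutive deltas are x, y, z in an order dictated by the bits of v
  at y and z. Since they span no edge, the colours of the pairs in {x, y, z} are constrained.
  When the bits at y and z agree, the pattern phi(x,y) = phi(y,z) \<noteq> phi(x,z) is excluded, so by
  hypothesis each bit value occurs at most n - 2 times above the lowest level. The other two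
  constraints exclude an alternating pattern of six bits above the lowest level. Hence the
  signature minus its first letter is a concatenation of at most five constant blocks of length
  at most n - 2, and there are at most 2 (2 (n - 1))^5 = 2^6 (n - 1)^5 signatures.\<close>

lemma bitd_eq_of_bool: "bitd a i = of_bool (bit a i)"
  by (simp add: bitd_def bit_iff_odd odd_iff_mod_2_eq_one even_iff_mod_2_eq_zero)

lemma bit_of_less_exp_imp_less:
  fixes a :: nat
  assumes "a < 2 ^ M" and "bit a j"
  shows "j < M"
  using assms by (metis bit_take_bit_iff take_bit_nat_eq_self)

lemma less_if_highest_different_bit:
  fixes a b :: nat
  assumes above: "\<And>j. i < j \<Longrightarrow> bit a j = bit b j" and "\<not> bit a i" and "bit b i"
  shows "a < b"
proof -
  have high: "drop_bit (Suc i) a = drop_bit (Suc i) b"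
    by (rule bit_eqI) (simp add: bit_drop_bit_eq above)
  have "take_bit (Suc i) a = take_bit i a"
    using \<open>\<not> bit a i\<close> by (simp add: take_bit_Suc_from_most)
  also have "\<dots> < 2 ^ i" by simp
  also have "\<dots> \<le> take_bit (Suc i) b"
    using \<open>bit b i\<close> by (simp add: take_bit_Suc_from_most)
  finally show ?thesis
    using bits_ident[of "Suc i" a] bits_ident[of "Suc i" b] unfolding high by linarith
qed

lemma delta_sym: "delta M a b = delta M b a"
  unfolding delta_def by metis

lemma
  fixes a b :: nat
  assumes "a < 2 ^ M" "b < 2 ^ M" "a \<noteq> b"
  shows delta_less: "delta M a b < M"
    and bit_delta: "bit a (delta M a b) \<noteq> bit b (delta M a b)"
    and bit_above_delta: "delta M a b < j \<Longrightarrow> bit a j = bit b j"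
proof -
  let ?D = "{i. i < M \<and> bitd a i \<noteq> bitd b i}"
  have D_eq: "?D = {i. bit a i \<noteq> bit b i}"
    using assms(1,2) by (auto simp: bitd_eq_of_bool dest: bit_of_less_exp_imp_less)
  obtain k where "bit a k \<noteq> bit b k" using assms(3) bit_eqI by blast
  then have "?D \<noteq> {}" using D_eq by blast
  then have "delta M a b \<in> ?D"
    unfolding delta_def by (intro Max_in) simp_all
  have max: "j \<in> ?D \<Longrightarrow> j \<le> delta M a b" for j
    unfolding delta_def by (intro Max_ge) simp_all
  from \<open>delta M a b \<in> ?D\<close> show "delta M a b < M" and "bit a (delta M a b) \<noteq> bit b (delta M a b)"
    using D_eq by auto
  show "delta M a b < j \<Longrightarrow> bit a j = bit b j"
    using max[of j] D_eq by force
qed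

lemma delta_eqI:
  fixes a b :: nat
  assumes "a < 2 ^ M" "b < 2 ^ M" "bit a i \<noteq> bit b i" "\<And>j. i < j \<Longrightarrow> bit a j = bit b j"
  shows "delta M a b = i"
  by (metis assms bit_above_delta bit_delta linorder_neqE_nat)

lemma less_iff_not_bit_delta:
  fixes a b :: nat
  assumes "a < 2 ^ M" "b < 2 ^ M" "a \<noteq> b"
  shows "a < b \<longleftrightarrow> \<not> bit a (delta M a b)"
  using less_if_highest_different_bit[of "delta M a b" a b]
    less_if_highest_different_bit[of "delta M a b" b a]
    bit_delta[OF assms] bit_above_delta[OF assms] by (metis not_less_iff_gr_or_eq)

lemma delta_ultrametric:
  fixes a b c :: nat
  assumes "a < 2 ^ M" "b < 2 ^ M" "c < 2 ^ M" "a \<noteq> b" "a \<noteq> c"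
    and "delta M a b < delta M a c"
  shows "delta M b c = delta M a c" and "b < c \<longleftrightarrow> a < c"
proof -
  have same_bit: "bit b (delta M a c) = bit a (delta M a c)"
    using assms bit_above_delta[of a M b] by metis
  show bc: "delta M b c = delta M a c"
    using assms same_bit bit_delta[of a M c] bit_above_delta[of a M c] bit_above_delta[of a M b]
    by (intro delta_eqI) auto
  have "b \<noteq> c" using assms(6) by auto
  then show "b < c \<longleftrightarrow> a < c"
    using assms less_iff_not_bit_delta bc same_bit by metis
qed

fun has_alternation :: "nat \<Rightarrow> bool \<Rightarrow> bool list \<Rightarrow> bool" where
  "has_alternation 0 b xs = True"
| "has_alternation (Suc r) b [] = False"
| "has_alternation (Suc r) b (x # xs) =
     (if x = b then has_alternation r (\<not> b) xs else has_alternation (Suc r) b xs)"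

fun blocks :: "nat \<Rightarrow> nat \<Rightarrow> bool list \<Rightarrow> bool" where
  "blocks 0 l xs \<longleftrightarrow> xs = []"
| "blocks (Suc r) l xs \<longleftrightarrow> (\<exists>k b ys. k \<le> l \<and> blocks r l ys \<and> xs = replicate k b @ ys)"

lemma blocks_Nil: "blocks r l []"
  by (induction r) auto

lemma has_alternation_replicate_neg:
  "has_alternation r b (replicate k (\<not> b) @ ys) = has_alternation r b ys"
proof (induction k)
  case (Suc k)
  then show ?case by (cases r) auto
qed simp

lemma count_list_replicate: "count_list (replicate k x) y = (if x = y then k else 0)"
  by (induction k) auto

lemma blocks_if_no_alternation:
  assumes "\<And>c. count_list xs c \<le> l" and "\<not> has_alternation (Suc r) (hd xs) xs"
  shows "blocks r l xs"
  using assms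
proof (induction r arbitrary: xs)
  case 0
  then show ?case by (cases xs) auto
next
  case (Suc r)
  show ?case
  proof (cases xs)
    case Nil
    then show ?thesis by (simp add: blocks_Nil)
  next
    case (Cons x xs')
    define k where "k = length (takeWhile ((=) x) xs')"
    define ys where "ys = dropWhile ((=) x) xs'"
    have "takeWhile ((=) x) xs' = replicate k x"
      unfolding k_def by (rule replicate_length_same[symmetric]) (auto dest: set_takeWhileD)
    then have xs: "xs = replicate (Suc k) x @ ys"
      using takeWhile_dropWhile_id[of "(=) x" xs'] unfolding Cons ys_def by simp
    have "Suc k \<le> l"
      using Suc.prems(1)[of x] unfolding xs by (simp add: count_list_replicate)
    moreover have "count_list ys c \<le> l" for c
      using Suc.prems(1)[of c] unfolding xs by (simp split: if_splits)
    moreover have "blocks r l ys"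
    proof (rule Suc.IH)
      have "ys = [] \<or> hd ys = (\<not> x)"
        unfolding ys_def using hd_dropWhile[of "(=) x" xs'] by auto
      moreover have "\<not> has_alternation (Suc r) (\<not> x) ys"
        using Suc.prems(2) xs has_alternation_replicate_neg[of "Suc r" "\<not> x" k ys] by simp
      ultimately show "\<not> has_alternation (Suc r) (hd ys) ys" by auto
    qed fact
    ultimately show ?thesis
      using xs by auto
  qed
qed

lemma blocks_Suc_eq_image:
  "{xs. blocks (Suc r) l xs} =
    (\<lambda>(k, b, ys). replicate k b @ ys) ` ({..l} \<times> UNIV \<times> {xs. blocks r l xs})"
  by (auto simp: image_iff) blast

lemma finite_blocks: "finite {xs. blocks r l xs}"
proof (induction r)
  case (Suc r)
  then show ?case
    unfolding blocks_Suc_eq_image by (intro finite_imageI finite_cartesian_product) simp_all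
qed simp

lemma card_blocks_le: "card {xs. blocks r l xs} \<le> (2 * (l + 1)) ^ r"
proof (induction r)
  case (Suc r)
  have "card {xs. blocks (Suc r) l xs} \<le> card ({..l} \<times> (UNIV :: bool set) \<times> {xs. blocks r l xs})"
    unfolding blocks_Suc_eq_image by (rule card_image_le) (simp add: finite_blocks)
  also have "\<dots> = 2 * (l + 1) * card {xs. blocks r l xs}"
    by (simp add: card_cartesian_product)
  also have "\<dots> \<le> 2 * (l + 1) * (2 * (l + 1)) ^ r"
    using Suc.IH by (rule mult_le_mono2)
  also have "\<dots> = (2 * (l + 1)) ^ Suc r"
    by simp
  finally show ?case .
qed simp

lemma alternating_subsequence:
  fixes zs :: "'a::linorder list"
  assumes "has_alternation r b (map f zs)" and "sorted_wrt (<) zs"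
  shows "\<exists>g. (\<forall>j<r. g j \<in> set zs \<and> f (g j) = (b \<longleftrightarrow> even j)) \<and> (\<forall>j. Suc j < r \<longrightarrow> g j < g (Suc j))"
  using assms
proof (induction zs arbitrary: r b)
  case Nil
  then show ?case by (cases r) auto
next
  case (Cons z zs)
  have sorted: "sorted_wrt (<) zs"
    using Cons.prems(2) by simp
  show ?case
  proof (cases "r = 0 \<or> f z \<noteq> b")
    case True
    then have "has_alternation r b (map f zs)"
      using Cons.prems(1) by (cases r) auto
    from Cons.IH[OF this sorted] show ?thesis
      by auto
  next
    case False
    then obtain r' where r: "r = Suc r'" and "f z = b"
      using not0_implies_Suc by blast
    then have "has_alternation r' (\<not> b) (map f zs)"
      using Cons.prems(1) by simp
    from Cons.IH[OF this sorted] obtain g where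
      g: "\<forall>j<r'. g j \<in> set zs \<and> f (g j) = (\<not> b \<longleftrightarrow> even j)"
        "\<forall>j. Suc j < r' \<longrightarrow> g j < g (Suc j)"
      by auto
    have "\<forall>j<r. case_nat z g j \<in> set (z # zs) \<and> f (case_nat z g j) = (b \<longleftrightarrow> even j)"
      using g(1) \<open>f z = b\<close> r by (auto split: nat.split)
    moreover have "\<forall>j. Suc j < r \<longrightarrow> case_nat z g j < case_nat z g (Suc j)"
      using g Cons.prems(2) r by (auto split: nat.split)
    ultimately show ?thesis
      by blast
  qed
qed

lemma sorted_list_of_set_split:
  fixes A :: "'a::linorder set"
  assumes "finite A" "d \<in> A"
  shows "sorted_list_of_set A =
    sorted_list_of_set {i \<in> A. i < d} @ d # sorted_list_of_set {i \<in> A. d < i}"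
  using assms
  by (intro sorted_distinct_set_unique) (auto simp: sorted_append less_imp_le)

locale independent_set =
  fixes M :: nat and phi :: "nat \<Rightarrow> nat \<Rightarrow> bool" and S :: "nat set"
  assumes phi_sym: "\<And>x y. x < M \<Longrightarrow> y < M \<Longrightarrow> x \<noteq> y \<Longrightarrow> phi x y = phi y x"
    and indep: "independent M phi S"
begin

lemma less_exp_if_mem: "v \<in> S \<Longrightarrow> v < 2 ^ M"
  using indep unfolding independent_def by auto

lemma finite_S: "finite S"
  using indep unfolding independent_def by (auto intro: finite_subset)

lemma no_edge:
  assumes "a \<in> S" "b \<in> S" "c \<in> S" "d \<in> S" "a < b" "b < c" "c < d"
  shows "\<not> is_edge M phi a b c d"
  using indep assms unfolding independent_def by blast

definition levels :: "nat \<Rightarrow> nat set" where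
  "levels v = delta M v ` (S - {v})"

lemma finite_levels: "finite (levels v)"
  unfolding levels_def using finite_S by simp

lemma less_if_mem_levels: "v \<in> S \<Longrightarrow> i \<in> levels v \<Longrightarrow> i < M"
  unfolding levels_def using delta_less less_exp_if_mem by blast

lemma mem_levels_iff: "i \<in> levels v \<longleftrightarrow> (\<exists>w\<in>S. w \<noteq> v \<and> delta M v w = i)"
  unfolding levels_def by auto

text \<open>p and q are v and a vertex branching off v at level x; u and w branch off v at levels
  y and z.\<close>
lemma level_witnesses:
  assumes v: "v \<in> S" and levels: "x \<in> levels v" "y \<in> levels v" "z \<in> levels v"
    and "x < y" "y < z"
  obtains p q u w where "p \<in> S" "q \<in> S" "u \<in> S" "w \<in> S" "p < q"
    "delta M p q = x" "delta M p u = y" "delta M q u = y"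
    "delta M p w = z" "delta M q w = z" "delta M u w = z"
    "if bit v y then u < p else q < u"
    "if bit v z then w < p \<and> w < u else q < w \<and> u < w"
proof -
  obtain wx wy wz where w: "wx \<in> S" "wy \<in> S" "wz \<in> S" "wx \<noteq> v" "wy \<noteq> v" "wz \<noteq> v"
    and d: "delta M v wx = x" "delta M v wy = y" "delta M v wz = z"
    using levels unfolding mem_levels_iff by blast
  have lt: "v < 2 ^ M" "wx < 2 ^ M" "wy < 2 ^ M" "wz < 2 ^ M"
    using v w less_exp_if_mem by auto
  have wy: "delta M t wy = y \<and> (t < wy \<longleftrightarrow> \<not> bit v y)" if "t \<in> {v, wx}" for t
    using that delta_ultrametric[of v M wx wy] less_iff_not_bit_delta[of v M wy] lt w d \<open>x < y\<close>
    by auto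
  have wz: "delta M t wz = z \<and> (t < wz \<longleftrightarrow> \<not> bit v z)" if "t \<in> {v, wx, wy}" for t
    using that delta_ultrametric[of v M wx wz] delta_ultrametric[of v M wy wz]
      less_iff_not_bit_delta[of v M wz] lt w d \<open>x < y\<close> \<open>y < z\<close> by auto
  have ne: "wx \<noteq> wy" "wx \<noteq> wz" "wy \<noteq> wz"
    using d \<open>x < y\<close> \<open>y < z\<close> by auto
  have oy: "if bit v y then wy < v \<and> wy < wx else v < wy \<and> wx < wy"
    using wy[of v] wy[of wx] ne w by auto
  have oz: "if bit v z then wz < v \<and> wz < wx \<and> wz < wy else v < wz \<and> wx < wz \<and> wy < wz"
    using wz[of v] wz[of wx] wz[of wy] ne w by auto
  have "delta M wx v = x" using d delta_sym by metis
  consider "v < wx" | "wx < v"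
    using w(4) by linarith
  then show thesis
  proof cases
    case 1
    then show thesis
      using that[of v wx wy wz] v w d wy[of v] wy[of wx] wz[of v] wz[of wx] wz[of wy] oy oz
      by (auto split: if_splits)
  next
    case 2
    then show thesis
      using that[of wx v wy wz] v w \<open>delta M wx v = x\<close> wy[of v] wy[of wx] wz[of v] wz[of wx]
        wz[of wy] oy oz by (auto split: if_splits)
  qed
qed

text \<open>These are the non-edge conditions (i), (ii) and (iii) for the four vertices of
  level_witnesses, taken in the order fixed by the bits of v at y and z.\<close>
lemma
  assumes v: "v \<in> S" and levels: "x \<in> levels v" "y \<in> levels v" "z \<in> levels v"
    and xy: "x < y" and yz: "y < z"
  shows level_triple_same_bit: "bit v y = bit v z \<Longrightarrow> \<not> (phi x y = phi y z \<and> phi y z \<noteq> phi x z)"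
    and level_triple_up: "\<not> bit v y \<Longrightarrow> bit v z \<Longrightarrow> phi x y = phi x z"
    and level_triple_down: "bit v y \<Longrightarrow> \<not> bit v z \<Longrightarrow> \<not> (phi x y = phi x z \<and> phi x z = phi y z)"
proof -
  obtain p q u w where S: "p \<in> S" "q \<in> S" "u \<in> S" "w \<in> S" and "p < q"
    and d: "delta M p q = x" "delta M p u = y" "delta M q u = y"
      "delta M p w = z" "delta M q w = z" "delta M u w = z"
    and o: "if bit v y then u < p else q < u"
      "if bit v z then w < p \<and> w < u else q < w \<and> u < w"
    using level_witnesses[OF assms] by blast
  have d': "delta M w u = z" "delta M u p = y" "delta M w p = z"
    using d delta_sym by metis+
  have "x < M" "y < M" "z < M"
    using v levels less_if_mem_levels by auto
  then have sym: "phi y x = phi x y" "phi z y = phi y z" "phi z x = phi x z"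
    using phi_sym xy yz by auto
  show "\<not> (phi x y = phi y z \<and> phi y z \<noteq> phi x z)" if "bit v y = bit v z"
  proof (cases "bit v y")
    case False
    then have "\<not> is_edge M phi p q u w"
      using that o \<open>p < q\<close> by (intro no_edge S) auto
    then show ?thesis
      using d xy yz unfolding is_edge_def Let_def by auto
  next
    case True
    then have "\<not> is_edge M phi w u p q"
      using that o \<open>p < q\<close> by (intro no_edge S) auto
    then show ?thesis
      using d d' sym xy yz unfolding is_edge_def Let_def by auto
  qed
  show "phi x y = phi x z" if "\<not> bit v y" "bit v z"
  proof -
    have "\<not> is_edge M phi w p q u"
      using that o \<open>p < q\<close> by (intro no_edge S) auto
    then show ?thesis
      using d d' sym xy yz unfolding is_edge_def Let_def by auto
  qed
  show "\<not> (phi x y = phi x z \<and> phi x z = phi y z)" if "bit v y" "\<not> bit v z"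
  proof -
    have "\<not> is_edge M phi u p q w"
      using that o \<open>p < q\<close> by (intro no_edge S) auto
    then show ?thesis
      using d d' sym xy yz unfolding is_edge_def Let_def by auto
  qed
qed

lemma no_alternation_from_unset:
  assumes v: "v \<in> S"
    and levels: "set [x0, x1, x2, x3, x4, x5, x6] \<subseteq> levels v"
    and sorted: "sorted_wrt (<) [x0, x1, x2, x3, x4, x5, x6]"
    and bits: "\<not> bit v x1" "bit v x2" "\<not> bit v x3" "bit v x4" "\<not> bit v x5" "bit v x6"
  shows False
proof -
  note up = level_triple_up[OF v] and down = level_triple_down[OF v]
  note xs = levels sorted bits
  have "phi x0 x1 = phi x0 x2" "phi x0 x1 = phi x0 x4" "phi x0 x3 = phi x0 x4"
    "phi x0 x1 = phi x0 x6" "phi x0 x5 = phi x0 x6"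
    by (rule up; use xs in auto)+
  then obtain c where c: "phi x0 x2 = c" "phi x0 x3 = c" "phi x0 x4 = c" "phi x0 x5 = c"
    by metis
  have "\<not> (phi x0 x2 = phi x0 x3 \<and> phi x0 x3 = phi x2 x3)"
    by (rule down; use xs in auto)
  moreover have "phi x2 x3 = phi x2 x4"
    by (rule up; use xs in auto)
  ultimately have x24: "phi x2 x4 \<noteq> c"
    using c by simp
  have "\<not> (phi x0 x2 = phi x0 x5 \<and> phi x0 x5 = phi x2 x5)"
    by (rule down; use xs in auto)
  then have x25: "phi x2 x5 \<noteq> c"
    using c by simp
  have "\<not> (phi x0 x4 = phi x0 x5 \<and> phi x0 x5 = phi x4 x5)"
    by (rule down; use xs in auto)
  then have x45: "phi x4 x5 \<noteq> c"
    using c by simp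
  have "\<not> (phi x2 x4 = phi x2 x5 \<and> phi x2 x5 = phi x4 x5)"
    by (rule down; use xs in auto)
  then show False
    using x24 x25 x45 by auto
qed

lemma no_alternation_from_set:
  assumes v: "v \<in> S"
    and levels: "set [x0, x1, x2, x3, x4, x5, x6] \<subseteq> levels v"
    and sorted: "sorted_wrt (<) [x0, x1, x2, x3, x4, x5, x6]"
    and bits: "bit v x1" "\<not> bit v x2" "bit v x3" "\<not> bit v x4" "bit v x5" "\<not> bit v x6"
  shows False
proof -
  note up = level_triple_up[OF v] and down = level_triple_down[OF v]
  note xs = levels sorted bits
  define c where "c = phi x0 x3"
  have "phi x0 x2 = phi x0 x3" "phi x0 x2 = phi x0 x5" "phi x0 x4 = phi x0 x5"
    "phi x1 x2 = phi x1 x3" "phi x1 x2 = phi x1 x5" "phi x1 x4 = phi x1 x5"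
    by (rule up; use xs in auto)+
  moreover have "\<not> (phi x0 x3 = phi x0 x4 \<and> phi x0 x4 = phi x3 x4)"
    "\<not> (phi x1 x3 = phi x1 x4 \<and> phi x1 x4 = phi x3 x4)"
    by (rule down; use xs in auto)+
  ultimately have c: "phi x0 x2 = c" "phi x0 x5 = c" "phi x1 x2 = c" "phi x1 x3 = c"
    "phi x1 x5 = c" "phi x3 x4 \<noteq> c"
    unfolding c_def by auto
  have "phi x3 x4 = phi x3 x5"
    by (rule up; use xs in auto)
  then have x35: "phi x3 x5 \<noteq> c"
    using c by simp
  have "\<not> (phi x0 x1 = phi x0 x2 \<and> phi x0 x2 = phi x1 x2)"
    by (rule down; use xs in auto)
  then have x01: "phi x0 x1 \<noteq> c"
    using c by simp
  have "phi x3 x6 \<noteq> c \<and> phi x5 x6 \<noteq> c"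
  proof (cases "phi x0 x6 = c")
    case True
    have "\<not> (phi x0 x3 = phi x0 x6 \<and> phi x0 x6 = phi x3 x6)"
      "\<not> (phi x0 x5 = phi x0 x6 \<and> phi x0 x6 = phi x5 x6)"
      by (rule down; use xs in auto)+
    then show ?thesis
      using True c c_def by auto
  next
    case False
    have "\<not> (phi x0 x1 = phi x0 x6 \<and> phi x0 x6 = phi x1 x6)"
      by (rule down; use xs in auto)
    then have "phi x1 x6 = c"
      using False x01 by auto
    moreover have "\<not> (phi x1 x3 = phi x1 x6 \<and> phi x1 x6 = phi x3 x6)"
      "\<not> (phi x1 x5 = phi x1 x6 \<and> phi x1 x6 = phi x5 x6)"
      by (rule down; use xs in auto)+
    ultimately show ?thesis
      using c by auto
  qed
  moreover have "\<not> (phi x3 x5 = phi x3 x6 \<and> phi x3 x6 = phi x5 x6)"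
    by (rule down; use xs in auto)
  ultimately show False
    using x35 by auto
qed

lemma no_alternation_above_Min_level:
  assumes v: "v \<in> S" and ne: "levels v \<noteq> {}"
  shows "\<not> has_alternation 6 b (map (bit v) (sorted_list_of_set (levels v - {Min (levels v)})))"
proof
  let ?m = "Min (levels v)"
  let ?L = "sorted_list_of_set (levels v - {?m})"
  assume alternation: "has_alternation 6 b (map (bit v) ?L)"
  have "sorted_wrt (<) ?L"
    by simp
  with alternation obtain g where g: "\<forall>j<6. g j \<in> set ?L \<and> bit v (g j) = (b \<longleftrightarrow> even j)"
    "\<forall>j. Suc j < 6 \<longrightarrow> g j < g (Suc j)"
    by (blast dest: alternating_subsequence)
  have levels: "set [?m, g 0, g 1, g 2, g 3, g 4, g 5] \<subseteq> levels v"
    using g(1) finite_levels ne by (auto simp: numeral_eq_Suc)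
  have "g 0 \<in> levels v - {?m}"
    using g(1) finite_levels by auto
  then have "?m < g 0"
    using Min_le[OF finite_levels, of "g 0" v] by auto
  moreover have "g 0 < g 1" "g 1 < g 2" "g 2 < g 3" "g 3 < g 4" "g 4 < g 5"
    using g(2) by (simp_all add: numeral_eq_Suc)
  ultimately have sorted: "sorted_wrt (<) [?m, g 0, g 1, g 2, g 3, g 4, g 5]"
    by simp
  have bits: "bit v (g j) = (b \<longleftrightarrow> even j)" if "j < 6" for j
    using g(1) that by blast
  show False
  proof (cases b)
    case True
    then show False
      using no_alternation_from_set[OF v levels sorted] bits[of 0] bits[of 1] bits[of 2]
        bits[of 3] bits[of 4] bits[of 5] by simp
  next
    case False
    then show False
      using no_alternation_from_unset[OF v levels sorted] bits[of 0] bits[of 1] bits[of 2]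
        bits[of 3] bits[of 4] bits[of 5] by simp
  qed
qed

definition signature :: "nat \<Rightarrow> bool list" where
  "signature v = map (bit v) (sorted_list_of_set (levels v))"

lemma levels_above_delta_subset:
  assumes "v \<in> S" "w \<in> S" "v \<noteq> w"
  shows "{i \<in> levels v. delta M v w < i} \<subseteq> levels w"
proof
  fix i
  assume "i \<in> {i \<in> levels v. delta M v w < i}"
  then obtain u where u: "u \<in> S" "u \<noteq> v" "delta M v u = i" and "delta M v w < i"
    unfolding mem_levels_iff by blast
  then have "delta M w u = i" "u \<noteq> w"
    using assms delta_ultrametric(1)[of v M w u] less_exp_if_mem by auto
  then show "i \<in> levels w"
    unfolding mem_levels_iff using u by blast
qed

lemma inj_on_signature: "inj_on signature S"
proof
  fix v w
  assume v: "v \<in> S" and w: "w \<in> S" and eq: "signature v = signature w"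
  show "v = w"
  proof (rule ccontr)
    assume "v \<noteq> w"
    define d where "d = delta M v w"
    have lt: "v < 2 ^ M" "w < 2 ^ M"
      using v w less_exp_if_mem by auto
    have d_levels: "d \<in> levels v" "d \<in> levels w"
      unfolding d_def mem_levels_iff using v w \<open>v \<noteq> w\<close> delta_sym by metis+
    have above: "bit v i = bit w i" if "d < i" for i
      using bit_above_delta[OF lt \<open>v \<noteq> w\<close>] that unfolding d_def by blast
    have "{i \<in> levels v. d < i} = {i \<in> levels w. d < i}"
      using levels_above_delta_subset[OF v w \<open>v \<noteq> w\<close>] levels_above_delta_subset[OF w v]
        \<open>v \<noteq> w\<close> delta_sym unfolding d_def by fastforce
    then obtain U where "signature v = map (bit v) (sorted_list_of_set {i \<in> levels v. i < d}) @ bit v d # U"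
        "signature w = map (bit w) (sorted_list_of_set {i \<in> levels w. i < d}) @ bit w d # U"
      unfolding signature_def
      using sorted_list_of_set_split[OF finite_levels d_levels(1)]
        sorted_list_of_set_split[OF finite_levels d_levels(2)] above
      by (simp add: finite_levels cong: map_cong)
    with eq have "bit v d = bit w d"
      by simp
    then show False
      using bit_delta[OF lt \<open>v \<noteq> w\<close>] unfolding d_def by simp
  qed
qed

end

locale switching_independent_set = independent_set +
  fixes n :: nat
  assumes n_set_switches: "\<And>A. A \<subseteq> {0..<M} \<Longrightarrow> card A = n \<Longrightarrow>
    \<exists>x\<in>A. \<exists>y\<in>A. \<exists>z\<in>A. x < y \<and> y < z \<and> phi x y = phi y z \<and> phi y z \<noteq> phi x z"
begin

lemma card_levels_with_bit_le:
  assumes v: "v \<in> S" and ne: "levels v \<noteq> {}" and "1 \<le> n"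
  shows "card {i \<in> levels v - {Min (levels v)}. bit v i = c} \<le> n - 2"
proof (rule ccontr)
  let ?m = "Min (levels v)"
  assume "\<not> ?thesis"
  then have "n - 1 \<le> card {i \<in> levels v - {?m}. bit v i = c}"
    by linarith
  then obtain C where C: "C \<subseteq> {i \<in> levels v - {?m}. bit v i = c}" "card C = n - 1" "finite C"
    by (rule obtain_subset_with_card_n)
  have m: "?m \<in> levels v" "\<And>i. i \<in> levels v \<Longrightarrow> ?m \<le> i"
    using finite_levels ne by auto
  let ?A = "insert ?m C"
  have "?m \<notin> C"
    using C(1) by auto
  then have A: "?A \<subseteq> levels v" "card ?A = n"
    using C m(1) \<open>1 \<le> n\<close> by auto
  then have "?A \<subseteq> {0..<M}"
    using less_if_mem_levels[OF v] by auto
  then obtain x y z where xyz: "x \<in> ?A" "y \<in> ?A" "z \<in> ?A"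
    "x < y" "y < z" "phi x y = phi y z" "phi y z \<noteq> phi x z"
    using n_set_switches A(2) by blast
  have "?m < y" "?m < z"
    using xyz A(1) m(2)[of x] by auto
  then have "bit v y = c" "bit v z = c"
    using xyz(2,3) C(1) by auto
  then show False
    using level_triple_same_bit[OF v _ _ _ xyz(4,5)] xyz A(1) by auto
qed

lemma blocks_tl_signature:
  assumes v: "v \<in> S" and ne: "levels v \<noteq> {}" and "1 \<le> n"
  shows "blocks 5 (n - 2) (tl (signature v))"
proof -
  let ?m = "Min (levels v)"
  let ?L = "sorted_list_of_set (levels v - {?m})"
  have tl: "tl (signature v) = map (bit v) ?L"
    unfolding signature_def using sorted_list_of_set_nonempty[OF finite_levels ne] by simp
  have "count_list (map (bit v) ?L) c \<le> n - 2" for c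
  proof -
    have "count_list (map (bit v) ?L) c = length (filter (\<lambda>i. bit v i = c) ?L)"
      by (simp add: count_list_eq_length_filter filter_map comp_def eq_commute)
    also have "\<dots> = card {i \<in> levels v - {?m}. bit v i = c}"
      using distinct_card[of "filter (\<lambda>i. bit v i = c) ?L"] finite_levels by simp
    finally show ?thesis
      using card_levels_with_bit_le[OF v ne \<open>1 \<le> n\<close>] by simp
  qed
  then show ?thesis
    using no_alternation_above_Min_level[OF v ne] unfolding tl
    by (intro blocks_if_no_alternation) (auto simp: numeral_eq_Suc)
qed

lemma card_S_le:
  assumes "2 \<le> card S" and "2 \<le> n"
  shows "card S \<le> 2 ^ 6 * (n - 1) ^ 5"
proof -
  let ?W = "{ys. blocks 5 (n - 2) ys}"
  let ?cons = "\<lambda>(b, ys). b # ys"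
  have "signature v \<in> ?cons ` (UNIV \<times> ?W)" if v: "v \<in> S" for v
  proof -
    have "\<not> S \<subseteq> {v}"
      using assms(1) card_mono[of "{v}" S] by auto
    then obtain w where "w \<in> S" "w \<noteq> v"
      by blast
    then have ne: "levels v \<noteq> {}"
      unfolding levels_def by blast
    then have "signature v = ?cons (hd (signature v), tl (signature v))"
      unfolding signature_def using finite_levels by simp
    moreover have "(hd (signature v), tl (signature v)) \<in> UNIV \<times> ?W"
      using blocks_tl_signature[OF v ne] assms(2) by simp
    ultimately show ?thesis
      by (rule image_eqI)
  qed
  then have sub: "signature ` S \<subseteq> ?cons ` (UNIV \<times> ?W)"
    by blast
  have "finite ?W"
    by (rule finite_blocks)
  then have fin: "finite ((UNIV :: bool set) \<times> ?W)"
    by simp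
  have "card S = card (signature ` S)"
    using card_image[OF inj_on_signature] by simp
  also have "\<dots> \<le> card (?cons ` (UNIV \<times> ?W))"
    using sub fin by (intro card_mono) simp_all
  also have "\<dots> \<le> card ((UNIV :: bool set) \<times> ?W)"
    using fin by (rule card_image_le)
  also have "\<dots> \<le> 2 * (2 * (n - 2 + 1)) ^ 5"
    using card_blocks_le[of 5 "n - 2"] by (simp add: card_cartesian_product)
  also have "n - 2 + 1 = n - 1"
    using assms(2) by simp
  also have "2 * (2 * (n - 1)) ^ 5 = 2 ^ 6 * (n - 1) ^ 5"
    by (simp add: power_mult_distrib)
  finally show ?thesis .
qed

end

theorem mainTheorem4:
  fixes n M :: nat and phi :: "nat \<Rightarrow> nat \<Rightarrow> bool"
  assumes "n \<ge> 5" and "M \<ge> 1"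
    and sym: "\<And>x y. x < M \<Longrightarrow> y < M \<Longrightarrow> x \<noteq> y \<Longrightarrow> phi x y = phi y x"
    and hyp: "\<And>A. A \<subseteq> {0..<M} \<Longrightarrow> card A = n \<Longrightarrow>
               \<exists>x\<in>A. \<exists>y\<in>A. \<exists>z\<in>A. x < y \<and> y < z \<and> phi x y = phi y z \<and> phi y z \<noteq> phi x z"
  shows "\<not> (\<exists>S. independent M phi S \<and> card S = 2 ^ 6 * n ^ 5 + 1)"
proof
  assume "\<exists>S. independent M phi S \<and> card S = 2 ^ 6 * n ^ 5 + 1"
  then obtain S where S: "independent M phi S" "card S = 2 ^ 6 * n ^ 5 + 1"
    by blast
  interpret switching_independent_set M phi S n
    using sym hyp S(1) by unfold_locales auto
  have "2 \<le> card S"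
    using S(2) \<open>n \<ge> 5\<close> by simp
  then have "card S \<le> 2 ^ 6 * (n - 1) ^ 5"
    using card_S_le \<open>n \<ge> 5\<close> by simp
  moreover have "2 ^ 6 * (n - 1) ^ 5 \<le> 2 ^ 6 * n ^ 5"
    by (simp add: power_mono)
  ultimately show False
    using S(2) by linarith
qed

end
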